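(* Let $S$ be a closed subset of $\mathbb{R}^d$, let $(\mathbb{X},d_{\mathbb{X}})$ be a metric space of extended real-valued functions on $S$, let $(\Xi,d_\Xi)$ be a metric space with Borel $\sigma$-algebra $\mathcal{B}(\Xi)$, and let $(\mathbb{P},d_{\mathbb{P}})$ be a metric space of probability measures on $(\Xi,\mathcal{B}(\Xi))$ such that $d_{\mathbb{P}}$ metrizes weak convergence. Let $f,f^\nu:\Xi\times\mathbb{X}\to\overline{\mathbb{R}}$, let $X,X^\nu\subset\mathbb{X}$, let $P,P^\nu\in\mathbb{P}$, and let $\theta^\nu\in[0,+\infty)$, $\nu\in\mathbb{N}$. Define on $\mathbb{X}\times\mathbb{P}$ (with the product topology) $$\phi(x,Q):=\mathbb{E}^Q\big[f(\xi,x)+\iota_X(x)\big]+\iota_{\{P\}}(Q),\qquad \phi^\nu(x,Q):=\mathbb{E}^Q\big[f^\nu(\xi,x)+\iota_{X^\nu}(x)\big]+\theta^\nu d_{\mathbb{P}}(Q,P^\nu).$$ Suppose that the sets $X^\nu$ are closed and set-converge to $X$, $\theta^\nu\to+\infty$, $\theta^\nu d_{\mathbb{P}}(P^\nu,P)\to0$, and for each $x\in\mathbb{X}$: (i) $f(\cdot,x)$ and $f^\nu(\cdot,x)$ are measurable for all $\nu$, and $f(\xi,x)>-\infty$ for all $\xi\in\Xi$; (ii) for every sequence $Q^\nu\in\mathbb{P}$ converging to $P$, $$\liminf_{K\to+\infty}\ \liminf_{(\nu,y)\to(+\infty,x)}\mathbb{E}^{Q^\nu}\Big[\big(f^\nu(\xi,y)+\iota_{X^\nu}(y)\big)\mathbb{1}\{\xi:f^\nu(\xi,y)+\iota_{X^\nu}(y)\le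 -K\}\Big]=0;$$ (iii) for $P$-a.e. $\xi\in\Xi$, $\liminf_{(\nu,y,\zeta)\to(+\infty,x,\xi)}f^\nu(\zeta,y)\ge f(\xi,x)$; (iv) for every sequence $x^\nu\in X^\nu$ converging to $x$ and every sequence $Q^\nu\in\mathbb{P}$ converging to some $Q\in\mathbb{P}$, $\liminf_{\nu\to+\infty}\mathbb{E}^{Q^\nu}[f^\nu(\xi,x^\nu)]>-\infty$; (v) for every sequence $x^\nu\in X^\nu$ converging to $x$, there exists a $P$-integrable function $g:\Xi\to[0,+\infty)$ such that for $P$-a.e. $\xi\in\Xi$, $f^\nu(\xi,x^\nu)\le g(\xi)$ for all $\nu\in\mathbb{N}$ and $f^\nu(\xi,x^\nu)\to f(\xi,x)$ as $\nu\to+\infty$. Then $\phi^\nu$ epi-converges to $\phi$ as functions on $\mathbb{X}\times\mathbb{P}$.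
   Context: $\overline{\mathbb{R}}=\mathbb{R}\cup\{-\infty,+\infty\}$. $\iota_C(x)=0$ if $x\in C$ and $+\infty$ otherwise. For a probability $\mu$ and measurable $\overline{\mathbb{R}}$-valued $g$, $\mathbb{E}^\mu[g]:=\int g_+\,d\mu-\int g_-\,d\mu$ with conventions $+\infty-\alpha=+\infty$ for all $\alpha\in\overline{\mathbb{R}}$ and $\beta-(+\infty)=-\infty$ for $\beta\in\mathbb{R}$. $\mathbb{1}\{B\}$ is the indicator. Sets $A^\nu$ set-converge to $A$ if both the outer limit (all limits of subsequences of points $a^\nu\in A^\nu$) and the inner limit (all limits of sequences $a^\nu\in A^\nu$) equal $A$. $\liminf_{(\nu,y)\to(+\infty,x)}a^\nu(y):=\lim_{\delta\downarrow0}\lim_{N\to\infty}\inf\{a^\nu(y):\nu\ge N, d_{\mathbb{X}}(y,x)<\delta\}$, and the three-variable version additionally requires $d_\Xi(\zeta,\xi)<\delta$. Epi-convergence of $\phi^\nu$ to $\phi$: for every point $z$, $\phi(z)\le\liminf\phi^\nu(z^\nu)$ for all $z^\nu\to z$, and some $z^\nu\to z$ has $\phi^\nu(z^\nu)\to\phi(z)$. *)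

theory Defs
  imports "HOL-Probability.Probability"
begin

definition seq_conv :: "('a \<Rightarrow> 'a \<Rightarrow> real) \<Rightarrow> (nat \<Rightarrow> 'a) \<Rightarrow> 'a \<Rightarrow> bool" where
  "seq_conv d xs x \<longleftrightarrow> (\<lambda>n. d (xs n) x) \<longlonglongrightarrow> 0"

definition iota :: "'a set \<Rightarrow> 'a \<Rightarrow> ereal" where
  "iota C x = (if x \<in> C then 0 else \<infinity>)"

text \<open>Extended expectation: int g_+ - int g_-, with +inf - a = +inf and b - (+inf) = -inf.\<close>
definition Eext :: "'a measure \<Rightarrow> ('a \<Rightarrow> ereal) \<Rightarrow> ereal" where
  "Eext \<mu> g =
     (let a = (\<integral>\<^sup>+ x. e2ennreal (g x) \<partial>\<mu>); b = (\<integral>\<^sup>+ x. e2ennreal (- g x) \<partial>\<mu>)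
      in if a = \<infinity> then \<infinity> else enn2ereal a - enn2ereal b)"

definition weak_conv :: "(nat \<Rightarrow> 'a::metric_space measure) \<Rightarrow> 'a measure \<Rightarrow> bool" where
  "weak_conv Qs Q \<longleftrightarrow>
     (\<forall>g::'a \<Rightarrow> real. continuous_on UNIV g \<and> bounded (range g) \<longrightarrow>
        (\<lambda>n. integral\<^sup>L (Qs n) g) \<longlonglongrightarrow> integral\<^sup>L Q g)"

definition outer_limit :: "'a set \<Rightarrow> ('a \<Rightarrow> 'a \<Rightarrow> real) \<Rightarrow> (nat \<Rightarrow> 'a set) \<Rightarrow> 'a set" where
  "outer_limit M d A = {z \<in> M. \<exists>r a. strict_mono r \<and> (\<forall>k. a k \<in> A (r k)) \<and> seq_conv d a z}"

definition inner_limit :: "'a set \<Rightarrow> ('a \<Rightarrow> 'a \<Rightarrow> real) \<Rightarrow> (nat \<Rightarrow> 'a set) \<Rightarrow> 'a set" where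
  "inner_limit M d A = {z \<in> M. \<exists>a. (\<forall>n. a n \<in> A n) \<and> seq_conv d a z}"

definition set_conv :: "'a set \<Rightarrow> ('a \<Rightarrow> 'a \<Rightarrow> real) \<Rightarrow> (nat \<Rightarrow> 'a set) \<Rightarrow> 'a set \<Rightarrow> bool" where
  "set_conv M d A B \<longleftrightarrow> outer_limit M d A = B \<and> inner_limit M d A = B"

text \<open>liminf_{(nu,y) -> (+inf,x)} a^nu(y)
  = lim_{delta -> 0} lim_{N -> inf} inf {a^nu(y) : nu >= N, d(y,x) < delta};
  both limits are of monotone families, hence are suprema.\<close>
definition liminf2 :: "'x set \<Rightarrow> ('x \<Rightarrow> 'x \<Rightarrow> real) \<Rightarrow> (nat \<Rightarrow> 'x \<Rightarrow> ereal) \<Rightarrow> 'x \<Rightarrow> ereal" where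
  "liminf2 M d a x =
     (SUP \<delta>\<in>{0<..}. SUP N. INF \<nu>\<in>{N..}. INF y\<in>{y\<in>M. d y x < \<delta>}. a \<nu> y)"

definition liminf3 :: "'x set \<Rightarrow> ('x \<Rightarrow> 'x \<Rightarrow> real) \<Rightarrow> (nat \<Rightarrow> 'z::metric_space \<Rightarrow> 'x \<Rightarrow> ereal)
     \<Rightarrow> 'x \<Rightarrow> 'z \<Rightarrow> ereal" where
  "liminf3 M d a x \<xi> =
     (SUP \<delta>\<in>{0<..}. SUP N. INF \<nu>\<in>{N..}. INF y\<in>{y\<in>M. d y x < \<delta>}.
        INF \<zeta>\<in>{\<zeta>. dist \<zeta> \<xi> < \<delta>}. a \<nu> \<zeta> y)"

text \<open>Epi-convergence of phis to phi on the product metric space M x PP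
  (convergence in the product topology is componentwise convergence).\<close>
definition epi_conv :: "'x set \<Rightarrow> ('x \<Rightarrow> 'x \<Rightarrow> real) \<Rightarrow> 'q set \<Rightarrow> ('q \<Rightarrow> 'q \<Rightarrow> real)
     \<Rightarrow> (nat \<Rightarrow> 'x \<Rightarrow> 'q \<Rightarrow> ereal) \<Rightarrow> ('x \<Rightarrow> 'q \<Rightarrow> ereal) \<Rightarrow> bool" where
  "epi_conv M d PP dP phis phi \<longleftrightarrow>
     (\<forall>x\<in>M. \<forall>Q\<in>PP.
        (\<forall>xs Qs. (\<forall>n. xs n \<in> M \<and> Qs n \<in> PP) \<and> seq_conv d xs x \<and> seq_conv dP Qs Q \<longrightarrow>
            phi x Q \<le> liminf (\<lambda>n. phis n (xs n) (Qs n))) \<and>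
        (\<exists>xs Qs. (\<forall>n. xs n \<in> M \<and> Qs n \<in> PP) \<and> seq_conv d xs x \<and> seq_conv dP Qs Q \<and>
            (\<lambda>n. phis n (xs n) (Qs n)) \<longlonglongrightarrow> phi x Q))"

definition phi_lim :: "('z \<Rightarrow> 'x \<Rightarrow> ereal) \<Rightarrow> 'x set \<Rightarrow> 'z measure \<Rightarrow> 'x \<Rightarrow> 'z measure \<Rightarrow> ereal" where
  "phi_lim f X P x Q = Eext Q (\<lambda>\<xi>. f \<xi> x + iota X x) + iota {P} Q"

definition phi_seq :: "(nat \<Rightarrow> 'z \<Rightarrow> 'x \<Rightarrow> ereal) \<Rightarrow> (nat \<Rightarrow> 'x set) \<Rightarrow> (nat \<Rightarrow> 'z measure)
     \<Rightarrow> (nat \<Rightarrow> real) \<Rightarrow> ('z measure \<Rightarrow> 'z measure \<Rightarrow> real) \<Rightarrow> nat \<Rightarrow> 'x \<Rightarrow> 'z measure \<Rightarrow> ereal" where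
  "phi_seq fs Xs Ps \<theta> dP \<nu> x Q =
     Eext Q (\<lambda>\<xi>. fs \<nu> \<xi> x + iota (Xs \<nu>) x) + ereal (\<theta> \<nu> * dP Q (Ps \<nu>))"

end

theory Submission
  imports Defs
begin

(*
  Away from the points (x, P) with x in X both sides are infinite in the limit: if x is not in X,
  points x^nu -> x eventually leave X^nu because X is the outer limit of the X^nu; if Q <> P, the
  penalty theta^nu d(Q^nu, P^nu) tends to infinity while (iv) keeps the expectations bounded
  below.  At (x, P) with x in X the liminf inequality is a Fatou lemma for weakly converging
  measures: above a level -K the integrands are controlled by the lower semicontinuity (iii) and
  by approximation from below with bounded Lipschitz functions, to which weak convergence
  applies; below -K they contribute little by (ii).  A recovery sequence is given by points
  x^nu in X^nu converging to x (X is also the inner limit) and Q^nu = P, for which (v) yields the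
  limsup inequality through the reverse Fatou lemma.
*)

section \<open>Extended expectations\<close>

lemma e2ennreal_enn2ereal_diff:
  fixes a b :: ennreal
  defines "h \<equiv> enn2ereal a - enn2ereal b"
  shows "e2ennreal h + b = a + e2ennreal (- h)" "e2ennreal h \<le> a" "e2ennreal (- h) \<le> b"
proof -
  have "e2ennreal h + b = a + e2ennreal (- h) \<and> e2ennreal h \<le> a \<and> e2ennreal (- h) \<le> b"
  proof (cases a rule: ennreal_cases)
    case (real x)
    show ?thesis
    proof (cases b rule: ennreal_cases)
      case (real y)
      then show ?thesis using \<open>a = ennreal x\<close> \<open>0 \<le> x\<close>
        by (cases "x \<le> y") (simp_all add: h_def ennreal_neg ennreal_plus[symmetric])
    qed (simp_all add: h_def \<open>a = ennreal x\<close> \<open>0 \<le> x\<close> e2ennreal_neg)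
  qed (cases b rule: ennreal_cases; simp add: h_def e2ennreal_neg)
  then show "e2ennreal h + b = a + e2ennreal (- h)" "e2ennreal h \<le> a" "e2ennreal (- h) \<le> b"
    by simp_all
qed

lemma Eext_eq_diff:
  fixes u v :: "'a \<Rightarrow> ennreal"
  assumes [measurable]: "u \<in> borel_measurable M" "v \<in> borel_measurable M"
    and h: "AE x in M. h x = enn2ereal (u x) - enn2ereal (v x)"
    and fin: "(\<integral>\<^sup>+x. u x \<partial>M) \<noteq> \<infinity> \<or> (\<integral>\<^sup>+x. v x \<partial>M) \<noteq> \<infinity>"
  shows "Eext M h = enn2ereal (\<integral>\<^sup>+x. u x \<partial>M) - enn2ereal (\<integral>\<^sup>+x. v x \<partial>M)"
proof -
  define A where "A = (\<integral>\<^sup>+x. e2ennreal (h x) \<partial>M)"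
  define B where "B = (\<integral>\<^sup>+x. e2ennreal (- h x) \<partial>M)"
  define U where "U = (\<integral>\<^sup>+x. u x \<partial>M)"
  define V where "V = (\<integral>\<^sup>+x. v x \<partial>M)"
  note parts = e2ennreal_enn2ereal_diff[of "u x" "v x" for x]
  have "A + V = (\<integral>\<^sup>+x. e2ennreal (enn2ereal (u x) - enn2ereal (v x)) + v x \<partial>M)"
    unfolding A_def V_def using h
    by (subst nn_integral_add) (auto intro!: nn_integral_cong_AE arg_cong2[where f="(+)"])
  also have "\<dots> = (\<integral>\<^sup>+x. u x + e2ennreal (- (enn2ereal (u x) - enn2ereal (v x))) \<partial>M)"
    using parts(1) by simp
  also have "\<dots> = U + B"
    unfolding U_def B_def using h
    by (subst nn_integral_add) (auto intro!: nn_integral_cong_AE arg_cong2[where f="(+)"])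
  finally have AV: "A + V = U + B" .
  have AU: "A \<le> U" unfolding A_def U_def using h parts(2)
    by (intro nn_integral_mono_AE) (auto elim!: eventually_mono)
  have BV: "B \<le> V" unfolding B_def V_def using h parts(3)
    by (intro nn_integral_mono_AE) (auto elim!: eventually_mono)
  have diff: "(if a = \<infinity> then \<infinity> else a - b) = c - d"
    if "a + d = c + b" "a \<le> c" "b \<le> d" "c \<noteq> \<infinity> \<or> d \<noteq> \<infinity>"
       "0 \<le> a" "0 \<le> b" "0 \<le> c" "0 \<le> d" for a b c d :: ereal
    using that by (cases a; cases b; cases c; cases d) auto
  have "Eext M h = (if enn2ereal A = \<infinity> then \<infinity> else enn2ereal A - enn2ereal B)"
    unfolding Eext_def Let_def A_def B_def by simp
  also have "\<dots> = enn2ereal U - enn2ereal V"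
  proof (rule diff)
    show "enn2ereal A + enn2ereal V = enn2ereal U + enn2ereal B"
      using AV by (simp flip: plus_ennreal.rep_eq)
    show "enn2ereal A \<le> enn2ereal U" "enn2ereal B \<le> enn2ereal V"
      using AU BV by (simp_all add: less_eq_ennreal.rep_eq)
    show "enn2ereal U \<noteq> \<infinity> \<or> enn2ereal V \<noteq> \<infinity>"
      using fin unfolding U_def V_def by simp
  qed simp_all
  finally show ?thesis unfolding U_def V_def .
qed

lemma Eext_mono:
  assumes "\<And>x. g x \<le> h x"
  shows "Eext M g \<le> Eext M h"
proof -
  have a: "(\<integral>\<^sup>+ x. e2ennreal (g x) \<partial>M) \<le> (\<integral>\<^sup>+ x. e2ennreal (h x) \<partial>M)"
    by (intro nn_integral_mono e2ennreal_mono assms)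
  have b: "(\<integral>\<^sup>+ x. e2ennreal (- h x) \<partial>M) \<le> (\<integral>\<^sup>+ x. e2ennreal (- g x) \<partial>M)"
    by (intro nn_integral_mono e2ennreal_mono) (use assms in auto)
  show ?thesis
    unfolding Eext_def Let_def using a b
    by (auto simp: less_eq_ennreal.rep_eq top_unique intro!: ereal_minus_mono)
qed

lemma Eext_PInf:
  assumes "prob_space M" "\<And>x. g x = \<infinity>"
  shows "Eext M g = \<infinity>"
proof -
  interpret prob_space M by fact
  have "(\<integral>\<^sup>+ x. e2ennreal (g x) \<partial>M) = \<infinity>"
    using assms(2) by (simp add: emeasure_space_1)
  then show ?thesis unfolding Eext_def Let_def by simp
qed

lemma Eext_le_truncation:
  assumes "prob_space M" and [measurable]: "h \<in> borel_measurable M" and "0 \<le> K"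
  shows "Eext M h \<le> enn2ereal (\<integral>\<^sup>+x. e2ennreal (h x + ereal K) \<partial>M) - ereal K"
proof -
  interpret prob_space M by fact
  have "Eext M h \<le> Eext M (\<lambda>x. max (h x) (- ereal K))"
    by (rule Eext_mono) simp
  also have "\<dots> = enn2ereal (\<integral>\<^sup>+x. e2ennreal (h x + ereal K) \<partial>M) - enn2ereal (\<integral>\<^sup>+x. ennreal K \<partial>M)"
  proof (rule Eext_eq_diff)
    have "max t (- ereal K) = enn2ereal (e2ennreal (t + ereal K)) - ereal K" for t
      using \<open>0 \<le> K\<close>
        by (cases t)
          (auto simp: e2ennreal_neg enn2ereal_e2ennreal max_def ennreal_neg zero_ennreal.rep_eq)
    then show "AE x in M. max (h x) (- ereal K)
        = enn2ereal (e2ennreal (h x + ereal K)) - enn2ereal (ennreal K)"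
      using \<open>0 \<le> K\<close> by simp
  qed (simp_all add: emeasure_space_1)
  finally show ?thesis
    using \<open>0 \<le> K\<close> by (simp add: emeasure_space_1)
qed

lemma Eext_ge_truncation:
  assumes "prob_space M" and [measurable]: "h \<in> borel_measurable M" and "0 \<le> K"
    and tail: "- ereal \<epsilon> \<le> Eext M (\<lambda>x. if h x \<le> - ereal K then h x else 0)"
  shows "enn2ereal (\<integral>\<^sup>+x. e2ennreal (h x + ereal K) \<partial>M) - ereal (K + \<epsilon>) \<le> Eext M h"
proof -
  interpret prob_space M by fact
  define t where "t x = (if h x \<le> - ereal K then h x else 0)" for x
  define v where "v x = (if h x \<le> - ereal K then e2ennreal (- h x) else ennreal K)" for x
  have [measurable]: "t \<in> borel_measurable M" "v \<in> borel_measurable M"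
    unfolding t_def v_def by measurable
  define C where "C = (\<integral>\<^sup>+x. e2ennreal (- t x) \<partial>M)"
  have "Eext M t = enn2ereal (\<integral>\<^sup>+x. 0 \<partial>M) - enn2ereal C"
    unfolding C_def
  proof (rule Eext_eq_diff)
    have "t x = enn2ereal 0 - enn2ereal (e2ennreal (- t x))" for x
      using \<open>0 \<le> K\<close> by (cases "h x") (auto simp: t_def enn2ereal_e2ennreal zero_ennreal.rep_eq)
    then show "AE x in M. t x = enn2ereal 0 - enn2ereal (e2ennreal (- t x))" by simp
  qed simp_all
  then have "- ereal \<epsilon> \<le> - enn2ereal C"
    using tail unfolding t_def by (simp add: zero_ennreal.rep_eq)
  then have C: "enn2ereal C \<le> ereal \<epsilon>"
    by (simp only: ereal_minus_le_minus)
  have "(\<integral>\<^sup>+x. v x \<partial>M) \<le> (\<integral>\<^sup>+x. ennreal K + e2ennreal (- t x) \<partial>M)"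
    by (intro nn_integral_mono) (auto simp: v_def t_def)
  also have "\<dots> = ennreal K + C"
    unfolding C_def by (simp add: nn_integral_add emeasure_space_1)
  finally have "enn2ereal (\<integral>\<^sup>+x. v x \<partial>M) \<le> ereal K + enn2ereal C"
    using \<open>0 \<le> K\<close> by (simp add: less_eq_ennreal.rep_eq plus_ennreal.rep_eq)
  with C have V: "enn2ereal (\<integral>\<^sup>+x. v x \<partial>M) \<le> ereal (K + \<epsilon>)"
    by (metis add_left_mono order_trans plus_ereal.simps(1))
  have "Eext M h = enn2ereal (\<integral>\<^sup>+x. e2ennreal (h x + ereal K) \<partial>M) - enn2ereal (\<integral>\<^sup>+x. v x \<partial>M)"
  proof (rule Eext_eq_diff)
    have "h x = enn2ereal (e2ennreal (h x + ereal K)) - enn2ereal (v x)" for x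
      using \<open>0 \<le> K\<close>
        by (cases "h x")
          (auto simp: v_def e2ennreal_neg enn2ereal_e2ennreal ennreal_neg zero_ennreal.rep_eq)
    then show "AE x in M. h x = enn2ereal (e2ennreal (h x + ereal K)) - enn2ereal (v x)" by simp
  qed (use V in \<open>auto simp: top_ennreal.rep_eq\<close>)
  then show ?thesis
    using V by (simp add: ereal_minus_mono)
qed

lemma liminf_enn2ereal: "liminf (\<lambda>n. enn2ereal (X n)) = enn2ereal (liminf X)"
  by (rule Liminf_compose_continuous_mono)
    (auto simp: continuous_on_enn2ereal mono_def less_eq_ennreal.rep_eq)

lemma Eext_dominated:
  assumes [measurable]: "h \<in> borel_measurable M" and "integrable M g" "\<And>x. 0 \<le> g x"
    and "AE x in M. h x \<le> ereal (g x)"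
  shows "enn2ereal (\<integral>\<^sup>+x. e2ennreal (ereal (g x) - h x) \<partial>M) = ereal (\<integral>x. g x \<partial>M) - Eext M h"
proof -
  have [measurable]: "g \<in> borel_measurable M"
    using \<open>integrable M g\<close> by (rule borel_measurable_integrable)
  have G: "(\<integral>\<^sup>+x. ennreal (g x) \<partial>M) = ennreal (\<integral>x. g x \<partial>M)"
    using assms by (intro nn_integral_eq_integral) auto
  have "Eext M h = enn2ereal (\<integral>\<^sup>+x. ennreal (g x) \<partial>M)
      - enn2ereal (\<integral>\<^sup>+x. e2ennreal (ereal (g x) - h x) \<partial>M)"
  proof (rule Eext_eq_diff)
    have "h x = enn2ereal (ennreal (g x)) - enn2ereal (e2ennreal (ereal (g x) - h x))"
      if "h x \<le> ereal (g x)" for x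
      using that \<open>0 \<le> g x\<close> by (cases "h x") (auto simp: enn2ereal_e2ennreal)
    then show "AE x in M.
        h x = enn2ereal (ennreal (g x)) - enn2ereal (e2ennreal (ereal (g x) - h x))"
      using assms(4) by (auto elim: eventually_mono)
  qed (simp_all add: G)
  then show ?thesis
    unfolding G using \<open>\<And>x. 0 \<le> g x\<close>
    by (cases "enn2ereal (\<integral>\<^sup>+x. e2ennreal (ereal (g x) - h x) \<partial>M)") (auto simp: integral_nonneg_AE)
qed

lemma limsup_Eext_le_dominated:
  assumes [measurable]: "\<And>n. h n \<in> borel_measurable M" "F \<in> borel_measurable M"
    and "integrable M g" "\<And>x. 0 \<le> g x"
    and dom: "AE x in M. (\<forall>n. h n x \<le> ereal (g x)) \<and> (\<lambda>n. h n x) \<longlonglongrightarrow> F x"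
  shows "limsup (\<lambda>n. Eext M (h n)) \<le> Eext M F"
proof -
  define c where "c = ereal (\<integral>x. g x \<partial>M)"
  have [measurable]: "g \<in> borel_measurable M"
    using \<open>integrable M g\<close> by (rule borel_measurable_integrable)
  have F_le: "AE x in M. F x \<le> ereal (g x)"
    using dom by eventually_elim (auto intro: LIMSEQ_le_const2)
  have "(\<integral>\<^sup>+x. e2ennreal (ereal (g x) - F x) \<partial>M)
      = (\<integral>\<^sup>+x. liminf (\<lambda>n. e2ennreal (ereal (g x) - h n x)) \<partial>M)"
    using dom
  proof (intro nn_integral_cong_AE, eventually_elim)
    case (elim x)
    then have "(\<lambda>n. ereal (g x) + - h n x) \<longlonglongrightarrow> ereal (g x) + - F x"
      by (intro tendsto_add_ereal_general tendsto_uminus_ereal) auto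
    then have "(\<lambda>n. e2ennreal (ereal (g x) - h n x)) \<longlonglongrightarrow> e2ennreal (ereal (g x) - F x)"
      by (intro tendsto_e2ennrealI) (simp add: minus_ereal_def)
    then show ?case by (simp add: lim_imp_Liminf)
  qed
  also have "\<dots> \<le> liminf (\<lambda>n. \<integral>\<^sup>+x. e2ennreal (ereal (g x) - h n x) \<partial>M)"
    by (rule nn_integral_liminf) simp
  finally have "enn2ereal (\<integral>\<^sup>+x. e2ennreal (ereal (g x) - F x) \<partial>M)
      \<le> liminf (\<lambda>n. enn2ereal (\<integral>\<^sup>+x. e2ennreal (ereal (g x) - h n x) \<partial>M))"
    by (simp add: less_eq_ennreal.rep_eq liminf_enn2ereal)
  also have "\<dots> = liminf (\<lambda>n. c - Eext M (h n))"
    unfolding c_def using dom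
    by (subst Eext_dominated[OF _ assms(3,4)]) (auto elim: eventually_mono)
  also have "\<dots> = c - limsup (\<lambda>n. Eext M (h n))"
    by (rule liminf_ereal_cminus) (simp add: c_def)
  finally have "c - Eext M F \<le> c - limsup (\<lambda>n. Eext M (h n))"
    unfolding c_def by (subst (asm) Eext_dominated[OF _ assms(3,4) F_le]) simp_all
  then show ?thesis
    unfolding c_def by (cases "Eext M F"; cases "limsup (\<lambda>n. Eext M (h n))") auto
qed

section \<open>Integrals under weak convergence\<close>

definition lipschitz_envelope :: "real \<Rightarrow> 'i set \<Rightarrow> ('i \<Rightarrow> 'a::metric_space \<Rightarrow> real) \<Rightarrow> 'a \<Rightarrow> real" where
  "lipschitz_envelope L I u \<xi> = (INF (i, \<zeta>) \<in> I \<times> UNIV. u i \<zeta> + L * dist \<zeta> \<xi>)"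

lemma lipschitz_envelope_le:
  assumes "\<And>i \<zeta>. 0 \<le> u i \<zeta>" "0 \<le> L" "i \<in> I"
  shows "lipschitz_envelope L I u \<xi> \<le> u i \<zeta> + L * dist \<zeta> \<xi>"
  unfolding lipschitz_envelope_def
  by (rule cINF_lower2[where x="(i, \<zeta>)"]) (auto intro!: bdd_belowI2[where m=0] simp: assms)

lemma lipschitz_envelope_greatest:
  assumes "I \<noteq> {}" "\<And>i \<zeta>. i \<in> I \<Longrightarrow> c \<le> u i \<zeta> + L * dist \<zeta> \<xi>"
  shows "c \<le> lipschitz_envelope L I u \<xi>"
  unfolding lipschitz_envelope_def using assms by (intro cINF_greatest) auto

lemma lipschitz_envelope_nonneg:
  assumes "\<And>i \<zeta>. 0 \<le> u i \<zeta>" "0 \<le> L" "I \<noteq> {}"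
  shows "0 \<le> lipschitz_envelope L I u \<xi>"
  using assms by (intro lipschitz_envelope_greatest) auto

lemma lipschitz_on_lipschitz_envelope:
  assumes "\<And>i \<zeta>. 0 \<le> u i \<zeta>" "0 \<le> L" "I \<noteq> {}"
  shows "L-lipschitz_on UNIV (lipschitz_envelope L I u)"
proof (rule lipschitz_onI)
  have *: "lipschitz_envelope L I u \<xi> \<le> lipschitz_envelope L I u \<xi>' + L * dist \<xi> \<xi>'" for \<xi> \<xi>'
  proof -
    have "lipschitz_envelope L I u \<xi> - L * dist \<xi> \<xi>' \<le> lipschitz_envelope L I u \<xi>'"
    proof (rule lipschitz_envelope_greatest[OF \<open>I \<noteq> {}\<close>])
      fix i \<zeta> assume "i \<in> I"
      have "lipschitz_envelope L I u \<xi> \<le> u i \<zeta> + L * dist \<zeta> \<xi>"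
        using assms(1,2) \<open>i \<in> I\<close> by (rule lipschitz_envelope_le)
      also have "\<dots> \<le> u i \<zeta> + L * (dist \<zeta> \<xi>' + dist \<xi> \<xi>')"
        using \<open>0 \<le> L\<close>
          by (intro add_left_mono mult_left_mono)
            (auto intro: dist_triangle_le[of _ \<xi>'] simp: dist_commute)
      finally show "lipschitz_envelope L I u \<xi> - L * dist \<xi> \<xi>' \<le> u i \<zeta> + L * dist \<zeta> \<xi>'"
        by (simp add: algebra_simps)
    qed
    then show ?thesis by simp
  qed
  show "dist (lipschitz_envelope L I u \<xi>) (lipschitz_envelope L I u \<xi>') \<le> L * dist \<xi> \<xi>'" for \<xi> \<xi>'
    using *[of \<xi> \<xi>'] *[of \<xi>' \<xi>] by (simp add: dist_real_def dist_commute abs_le_iff)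
qed fact

lemma weak_conv_nn_integral:
  fixes Qs :: "nat \<Rightarrow> 'a::metric_space measure"
  assumes "weak_conv Qs P" "continuous_on UNIV \<phi>" "bounded (range \<phi>)" "\<And>x. 0 \<le> \<phi> x"
    and "prob_space P" "sets P = sets borel" "\<And>n. prob_space (Qs n)" "\<And>n. sets (Qs n) = sets borel"
  shows "(\<lambda>n. \<integral>\<^sup>+x. ennreal (\<phi> x) \<partial>Qs n) \<longlonglongrightarrow> (\<integral>\<^sup>+x. ennreal (\<phi> x) \<partial>P)"
proof -
  obtain B where B: "\<And>x. norm (\<phi> x) \<le> B"
    using \<open>bounded (range \<phi>)\<close> unfolding bounded_iff by blast
  have eq: "(\<integral>\<^sup>+x. ennreal (\<phi> x) \<partial>M) = ennreal (\<integral>x. \<phi> x \<partial>M)"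
    if "prob_space M" "sets M = sets borel" for M
  proof -
    interpret prob_space M by fact
    have "\<phi> \<in> borel_measurable M"
      using borel_measurable_continuous_onI[OF assms(2)]
        by (simp add: measurable_cong_sets[OF that(2)])
    then have "integrable M \<phi>"
      using B by (intro integrable_const_bound[of _ B]) auto
    then show ?thesis by (rule nn_integral_eq_integral) (simp add: assms(4))
  qed
  have "(\<lambda>n. \<integral>x. \<phi> x \<partial>Qs n) \<longlonglongrightarrow> (\<integral>x. \<phi> x \<partial>P)"
    using assms(1-3) unfolding weak_conv_def by blast
  then show ?thesis
    by (simp add: eq assms(5-8) tendsto_ennrealI)
qed

(* Bounded Lipschitz functions below every g n with n >= m; they increase in m to at least the
   lower limit of g and serve as test functions for weak convergence. *)
definition lipschitz_minorant :: "nat \<Rightarrow> (nat \<Rightarrow> 'a::metric_space \<Rightarrow> ennreal) \<Rightarrow> 'a \<Rightarrow> real" where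
  "lipschitz_minorant m g =
     lipschitz_envelope (real m) {m..} (\<lambda>n \<zeta>. enn2real (min (g n \<zeta>) (of_nat m)))"

lemma ennreal_enn2real_min_of_nat: "ennreal (enn2real (min x (of_nat m))) = min x (of_nat m)"
  by (simp add: min.strict_coboundedI2 of_nat_less_top)

lemma lipschitz_minorant_nonneg: "0 \<le> lipschitz_minorant m g \<xi>"
  unfolding lipschitz_minorant_def by (rule lipschitz_envelope_nonneg) auto

lemma lipschitz_minorant_le:
  assumes "m \<le> n"
  shows "ennreal (lipschitz_minorant m g \<xi>) \<le> min (g n \<xi>) (of_nat m)"
proof -
  have "lipschitz_minorant m g \<xi> \<le> enn2real (min (g n \<xi>) (of_nat m))"
    using assms
      lipschitz_envelope_le[of "\<lambda>n \<zeta>. enn2real (min (g n \<zeta>) (of_nat m))" "real m" n "{m..}" \<xi> \<xi>]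
    unfolding lipschitz_minorant_def by simp
  then show ?thesis
    by (metis ennreal_enn2real_min_of_nat ennreal_leI)
qed

lemma lipschitz_on_lipschitz_minorant: "(real m)-lipschitz_on UNIV (lipschitz_minorant m g)"
  unfolding lipschitz_minorant_def by (rule lipschitz_on_lipschitz_envelope) auto

lemma lipschitz_minorant_mono:
  assumes "m \<le> m'"
  shows "lipschitz_minorant m g \<xi> \<le> lipschitz_minorant m' g \<xi>"
  unfolding lipschitz_minorant_def[of m']
proof (rule lipschitz_envelope_greatest)
  fix n \<zeta> assume "n \<in> {m'..}"
  then have "lipschitz_minorant m g \<xi> \<le> enn2real (min (g n \<zeta>) (of_nat m)) + real m * dist \<zeta> \<xi>"
    using assms unfolding lipschitz_minorant_def by (intro lipschitz_envelope_le) auto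
  also have "\<dots> \<le> enn2real (min (g n \<zeta>) (of_nat m')) + real m' * dist \<zeta> \<xi>"
    using assms
    by (intro add_mono mult_right_mono enn2real_mono min.mono)
      (auto simp: min.strict_coboundedI2 of_nat_less_top)
  finally show "lipschitz_minorant m g \<xi>
      \<le> enn2real (min (g n \<zeta>) (of_nat m')) + real m' * dist \<zeta> \<xi>" .
qed simp

lemma Liminf_le_SUP_lipschitz_minorant:
  "Liminf (sequentially \<times>\<^sub>F nhds \<xi>) (\<lambda>(n, \<zeta>). g n \<zeta>) \<le> (SUP m. ennreal (lipschitz_minorant m g \<xi>))"
proof (rule dense_le)
  fix y assume "y < Liminf (sequentially \<times>\<^sub>F nhds \<xi>) (\<lambda>(n, \<zeta>). g n \<zeta>)"
  then have "\<forall>\<^sub>F p in sequentially \<times>\<^sub>F nhds \<xi>. y < g (fst p) (snd p)"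
    by (auto dest: less_LiminfD simp: case_prod_beta)
  then obtain Pn P\<zeta> where "eventually Pn sequentially" "eventually P\<zeta> (nhds \<xi>)"
    and "\<And>n \<zeta>. Pn n \<Longrightarrow> P\<zeta> \<zeta> \<Longrightarrow> y < g n \<zeta>"
    unfolding eventually_prod_filter by auto
  then obtain N \<delta> where "0 < \<delta>" and N\<delta>: "\<And>n \<zeta>. N \<le> n \<Longrightarrow> dist \<zeta> \<xi> < \<delta> \<Longrightarrow> y < g n \<zeta>"
    unfolding eventually_sequentially eventually_nhds_metric by metis
  have "y \<noteq> \<top>"
    using \<open>y < _\<close> by (auto simp: top_unique)
  then obtain c where c: "y = ennreal c" "0 \<le> c"
    by (cases y rule: ennreal_cases) auto
  obtain m :: nat where m: "max (real N) (max c (c / \<delta>)) \<le> real m"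
    using real_arch_simple by blast
  \<comment> \<open>near \<xi> the level c lies below g n, far from \<xi> below the slope term m * dist\<close>
  have "c \<le> lipschitz_minorant m g \<xi>"
    unfolding lipschitz_minorant_def
  proof (rule lipschitz_envelope_greatest)
    fix n \<zeta> assume "n \<in> {m..}"
    show "c \<le> enn2real (min (g n \<zeta>) (of_nat m)) + real m * dist \<zeta> \<xi>"
    proof (cases "dist \<zeta> \<xi> < \<delta>")
      case True
      then have "ennreal c \<le> min (g n \<zeta>) (of_nat m)"
        using N\<delta>[of n \<zeta>] m \<open>n \<in> {m..}\<close> c
        by (auto simp: ennreal_of_nat_eq_real_of_nat intro: ennreal_leI)
      then have "c \<le> enn2real (min (g n \<zeta>) (of_nat m))"
        by (metis ennreal_enn2real_min_of_nat enn2real_nonneg ennreal_le_iff)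
      then show ?thesis by (simp add: add_increasing2)
    next
      case False
      then have "c \<le> real m * dist \<zeta> \<xi>"
        using m \<open>0 < \<delta>\<close> by (smt (verit) mult_left_mono of_nat_0_le_iff pos_divide_le_eq)
      then show ?thesis by (simp add: add_increasing)
    qed
  qed simp
  then show "y \<le> (SUP m. ennreal (lipschitz_minorant m g \<xi>))"
    unfolding c(1) by (intro SUP_upper2[of m]) (auto intro: ennreal_leI)
qed

lemma nn_integral_le_liminf_weak_conv:
  fixes Qs :: "nat \<Rightarrow> 'a::metric_space measure" and g :: "nat \<Rightarrow> 'a \<Rightarrow> ennreal"
  assumes wc: "weak_conv Qs P"
    and P: "prob_space P" "sets P = sets borel"
    and Qs: "\<And>n. prob_space (Qs n)" "\<And>n. sets (Qs n) = sets borel"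
    and T_le: "AE \<xi> in P. T \<xi> \<le> Liminf (sequentially \<times>\<^sub>F nhds \<xi>) (\<lambda>(n, \<zeta>). g n \<zeta>)"
  shows "(\<integral>\<^sup>+\<xi>. T \<xi> \<partial>P) \<le> liminf (\<lambda>n. \<integral>\<^sup>+\<zeta>. g n \<zeta> \<partial>Qs n)"
proof -
  define \<phi> where "\<phi> m = lipschitz_minorant m g" for m
  have cont: "continuous_on UNIV (\<phi> m)" for m
    unfolding \<phi>_def by (rule lipschitz_on_continuous_on[OF lipschitz_on_lipschitz_minorant])
  have bounded: "bounded (range (\<phi> m))" for m
  proof -
    have "ennreal (\<phi> m \<xi>) \<le> ennreal (real m)" for \<xi>
      using lipschitz_minorant_le[of m m g \<xi>] unfolding \<phi>_def
        by (simp add: ennreal_of_nat_eq_real_of_nat)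
    then have "\<bar>\<phi> m \<xi>\<bar> \<le> real m" for \<xi>
      using lipschitz_minorant_nonneg[of m g \<xi>] unfolding \<phi>_def by simp
    then show ?thesis
      unfolding bounded_real by blast
  qed
  have "(\<integral>\<^sup>+\<xi>. ennreal (\<phi> m \<xi>) \<partial>P) \<le> liminf (\<lambda>n. \<integral>\<^sup>+\<zeta>. g n \<zeta> \<partial>Qs n)" for m
  proof -
    have "(\<lambda>n. \<integral>\<^sup>+\<xi>. ennreal (\<phi> m \<xi>) \<partial>Qs n) \<longlonglongrightarrow> (\<integral>\<^sup>+\<xi>. ennreal (\<phi> m \<xi>) \<partial>P)"
      using wc cont bounded _ P Qs
        by (rule weak_conv_nn_integral) (simp add: \<phi>_def lipschitz_minorant_nonneg)
    then have "(\<integral>\<^sup>+\<xi>. ennreal (\<phi> m \<xi>) \<partial>P) = liminf (\<lambda>n. \<integral>\<^sup>+\<xi>. ennreal (\<phi> m \<xi>) \<partial>Qs n)"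
      by (simp add: lim_imp_Liminf)
    also have "\<dots> \<le> liminf (\<lambda>n. \<integral>\<^sup>+\<zeta>. g n \<zeta> \<partial>Qs n)"
      using eventually_ge_at_top[of m]
    proof (intro Liminf_mono, eventually_elim)
      case (elim n)
      show ?case
        using lipschitz_minorant_le[OF \<open>m \<le> n\<close>] unfolding \<phi>_def
          by (intro nn_integral_mono) (auto intro: order_trans)
    qed
    finally show ?thesis .
  qed
  moreover have "(\<integral>\<^sup>+\<xi>. T \<xi> \<partial>P) \<le> (SUP m. \<integral>\<^sup>+\<xi>. ennreal (\<phi> m \<xi>) \<partial>P)"
  proof -
    have "(\<integral>\<^sup>+\<xi>. T \<xi> \<partial>P) \<le> (\<integral>\<^sup>+\<xi>. (SUP m. ennreal (\<phi> m \<xi>)) \<partial>P)"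
      using T_le unfolding \<phi>_def
      by (intro nn_integral_mono_AE)
        (auto elim!: eventually_mono intro: order_trans Liminf_le_SUP_lipschitz_minorant)
    also have "\<dots> = (SUP m. \<integral>\<^sup>+\<xi>. ennreal (\<phi> m \<xi>) \<partial>P)"
    proof (rule nn_integral_monotone_convergence_SUP)
      show "incseq (\<lambda>m \<xi>. ennreal (\<phi> m \<xi>))"
        unfolding \<phi>_def
          by (auto simp: incseq_def le_fun_def intro: ennreal_leI lipschitz_minorant_mono)
      show "(\<lambda>\<xi>. ennreal (\<phi> m \<xi>)) \<in> borel_measurable P" for m
        using borel_measurable_continuous_onI[OF cont] by (simp add: measurable_cong_sets[OF P(2)])
    qed
    finally show ?thesis .
  qed
  ultimately show ?thesis
    by (blast intro: order_trans SUP_least)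
qed

lemma Liminf_e2ennreal_add:
  assumes "F \<noteq> bot"
  shows "Liminf F (\<lambda>x. e2ennreal (f x + ereal c)) = e2ennreal (Liminf F f + ereal c)"
proof -
  have "Liminf F (\<lambda>x. e2ennreal (f x + ereal c)) = e2ennreal (Liminf F (\<lambda>x. f x + ereal c))"
    using assms
      by (intro Liminf_compose_continuous_mono)
        (auto simp: continuous_on_e2ennreal mono_def e2ennreal_mono)
  also have "\<dots> = e2ennreal (Liminf F f + ereal c)"
    using assms by (simp add: Liminf_add_ereal_right)
  finally show ?thesis .
qed

lemma Eext_le_liminf_weak_conv_truncated:
  fixes Qs :: "nat \<Rightarrow> 'a::metric_space measure"
  assumes wc: "weak_conv Qs P"
    and P: "prob_space P" "sets P = sets borel"
    and Qs: "\<And>n. prob_space (Qs n)" "\<And>n. sets (Qs n) = sets borel"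
    and [measurable]: "\<And>n. h n \<in> borel_measurable (Qs n)" "F \<in> borel_measurable P"
    and F_le: "AE \<xi> in P. F \<xi> \<le> Liminf (sequentially \<times>\<^sub>F nhds \<xi>) (\<lambda>(n, \<zeta>). h n \<zeta>)"
    and "0 \<le> K"
    and tail: "\<forall>\<^sub>F n in sequentially.
                 - ereal \<epsilon> \<le> Eext (Qs n) (\<lambda>\<xi>. if h n \<xi> \<le> - ereal K then h n \<xi> else 0)"
  shows "Eext P F \<le> liminf (\<lambda>n. Eext (Qs n) (h n)) + ereal \<epsilon>"
proof -
  define I where "I n = (\<integral>\<^sup>+\<xi>. e2ennreal (h n \<xi> + ereal K) \<partial>Qs n)" for n
  have "\<forall>\<^sub>F n in sequentially. enn2ereal (I n) - ereal (K + \<epsilon>) \<le> Eext (Qs n) (h n)"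
    using tail
  proof eventually_elim
    case (elim n)
    then show ?case
      unfolding I_def by (intro Eext_ge_truncation Qs \<open>0 \<le> K\<close>) auto
  qed
  then have "liminf (\<lambda>n. enn2ereal (I n) - ereal (K + \<epsilon>)) \<le> liminf (\<lambda>n. Eext (Qs n) (h n))"
    by (rule Liminf_mono)
  moreover have "liminf (\<lambda>n. enn2ereal (I n) - ereal (K + \<epsilon>))
      = liminf (\<lambda>n. enn2ereal (I n)) - ereal (K + \<epsilon>)"
    using Liminf_add_ereal_right[where F=sequentially and g="\<lambda>n. enn2ereal (I n)"
        and c="- ereal (K + \<epsilon>)"]
    by (simp add: minus_ereal_def)
  ultimately have I: "liminf (\<lambda>n. enn2ereal (I n)) - ereal (K + \<epsilon>) \<le> liminf (\<lambda>n. Eext (Qs n) (h n))"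
    by simp
  have "(\<integral>\<^sup>+\<xi>. e2ennreal (F \<xi> + ereal K) \<partial>P) \<le> liminf I"
    unfolding I_def
  proof (rule nn_integral_le_liminf_weak_conv[OF wc P Qs])
    show "AE \<xi> in P. e2ennreal (F \<xi> + ereal K)
        \<le> Liminf (sequentially \<times>\<^sub>F nhds \<xi>) (\<lambda>(n, \<zeta>). e2ennreal (h n \<zeta> + ereal K))"
      using F_le
    proof eventually_elim
      case (elim \<xi>)
      then show ?case
        using Liminf_e2ennreal_add[of "sequentially \<times>\<^sub>F nhds \<xi>" "\<lambda>(n, \<zeta>). h n \<zeta>" K]
        by (simp add: prod_filter_eq_bot split_beta' e2ennreal_mono add_right_mono)
    qed
  qed
  moreover have "Eext P F \<le> enn2ereal (\<integral>\<^sup>+\<xi>. e2ennreal (F \<xi> + ereal K) \<partial>P) - ereal K"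
    using P(1) _ \<open>0 \<le> K\<close> by (rule Eext_le_truncation) measurable
  ultimately have "Eext P F \<le> enn2ereal (liminf I) - ereal K"
    by (metis ereal_minus_mono less_eq_ennreal.rep_eq order_refl order_trans)
  also have "\<dots> = (liminf (\<lambda>n. enn2ereal (I n)) - ereal (K + \<epsilon>)) + ereal \<epsilon>"
    unfolding liminf_enn2ereal by (cases "enn2ereal (liminf I)") auto
  finally show ?thesis
    using I by (metis add_right_mono order_trans)
qed

lemma Eext_le_liminf_weak_conv:
  fixes Qs :: "nat \<Rightarrow> 'a::metric_space measure"
  assumes wc: "weak_conv Qs P"
    and P: "prob_space P" "sets P = sets borel"
    and Qs: "\<And>n. prob_space (Qs n)" "\<And>n. sets (Qs n) = sets borel"
    and [measurable]: "\<And>n. h n \<in> borel_measurable (Qs n)" "F \<in> borel_measurable P"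
    and F_le: "AE \<xi> in P. F \<xi> \<le> Liminf (sequentially \<times>\<^sub>F nhds \<xi>) (\<lambda>(n, \<zeta>). h n \<zeta>)"
    and tails: "0 \<le> Liminf at_top (\<lambda>K::real.
                   liminf (\<lambda>n. Eext (Qs n) (\<lambda>\<xi>. if h n \<xi> \<le> - ereal K then h n \<xi> else 0)))"
  shows "Eext P F \<le> liminf (\<lambda>n. Eext (Qs n) (h n))"
proof (rule ereal_le_epsilon2)
  fix \<epsilon> :: real assume "0 < \<epsilon>"
  have "- ereal \<epsilon> < Liminf at_top (\<lambda>K::real.
      liminf (\<lambda>n. Eext (Qs n) (\<lambda>\<xi>. if h n \<xi> \<le> - ereal K then h n \<xi> else 0)))"
    by (rule order.strict_trans2[OF _ tails]) (simp add: \<open>0 < \<epsilon>\<close>)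
  then have "\<forall>\<^sub>F K in at_top. - ereal \<epsilon> <
      liminf (\<lambda>n. Eext (Qs n) (\<lambda>\<xi>. if h n \<xi> \<le> - ereal K then h n \<xi> else 0))"
    by (rule less_LiminfD)
  then obtain K0 where K0: "\<And>K. K0 \<le> K \<Longrightarrow> - ereal \<epsilon> <
      liminf (\<lambda>n. Eext (Qs n) (\<lambda>\<xi>. if h n \<xi> \<le> - ereal K then h n \<xi> else 0))"
    unfolding eventually_at_top_linorder by blast
  define K where "K = max K0 0"
  have tail: "\<forall>\<^sub>F n in sequentially.
      - ereal \<epsilon> \<le> Eext (Qs n) (\<lambda>\<xi>. if h n \<xi> \<le> - ereal K then h n \<xi> else 0)"
    using less_LiminfD[OF K0[of K]] by (auto simp: K_def elim: eventually_mono)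
  show "Eext P F \<le> liminf (\<lambda>n. Eext (Qs n) (h n)) + ereal \<epsilon>"
    by (rule Eext_le_liminf_weak_conv_truncated[OF wc P Qs assms(6,7) F_le _ tail])
      (simp add: K_def)
qed

section \<open>Sequences in metric spaces\<close>

lemma liminf2_le_liminf:
  assumes "\<And>n. ys n \<in> M" "seq_conv d ys x"
  shows "liminf2 M d a x \<le> liminf (\<lambda>n. a n (ys n))"
proof (rule le_Liminf_iff[THEN iffD2], intro allI impI)
  fix c assume "c < liminf2 M d a x"
  then obtain \<delta> N where "0 < \<delta>" and N: "c < (INF \<nu>\<in>{N..}. INF y\<in>{y\<in>M. d y x < \<delta>}. a \<nu> y)"
    unfolding liminf2_def less_SUP_iff by auto
  have "\<forall>\<^sub>F n in sequentially. d (ys n) x < \<delta>"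
    using assms(2) \<open>0 < \<delta>\<close> unfolding seq_conv_def by (intro order_tendstoD(2)) auto
  then show "\<forall>\<^sub>F n in sequentially. c < a n (ys n)"
    using eventually_ge_at_top[of N]
  proof eventually_elim
    case (elim n)
    then show ?case
      using less_INF_D[OF less_INF_D[OF N, of n], of "ys n"] assms(1) by simp
  qed
qed

lemma liminf3_le_Liminf:
  assumes "\<And>n. ys n \<in> M" "seq_conv d ys x"
  shows "liminf3 M d a x \<xi> \<le> Liminf (sequentially \<times>\<^sub>F nhds \<xi>) (\<lambda>(n, \<zeta>). a n \<zeta> (ys n))"
proof (rule le_Liminf_iff[THEN iffD2], intro allI impI)
  fix c assume "c < liminf3 M d a x \<xi>"
  then obtain \<delta> N where "0 < \<delta>" and N: "c < (INF \<nu>\<in>{N..}. INF y\<in>{y\<in>M. d y x < \<delta>}.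
      INF \<zeta>\<in>{\<zeta>. dist \<zeta> \<xi> < \<delta>}. a \<nu> \<zeta> y)"
    unfolding liminf3_def less_SUP_iff by auto
  have close: "c < a n \<zeta> (ys n)" if "N \<le> n \<and> d (ys n) x < \<delta>" "dist \<zeta> \<xi> < \<delta>" for n \<zeta>
    using less_INF_D[OF less_INF_D[OF less_INF_D[OF N, of n], of "ys n"], of \<zeta>] assms(1) that
      by simp
  have "\<forall>\<^sub>F n in sequentially. N \<le> n \<and> d (ys n) x < \<delta>"
    using assms(2) \<open>0 < \<delta>\<close> eventually_ge_at_top[of N] unfolding seq_conv_def
    by (auto intro: order_tendstoD(2) eventually_conj)
  moreover have "\<forall>\<^sub>F \<zeta> in nhds \<xi>. dist \<zeta> \<xi> < \<delta>"
    using \<open>0 < \<delta>\<close> eventually_nhds_metric by blast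
  ultimately have "\<forall>\<^sub>F p in sequentially \<times>\<^sub>F nhds \<xi>.
      (N \<le> fst p \<and> d (ys (fst p)) x < \<delta>) \<and> dist (snd p) \<xi> < \<delta>"
    by (rule eventually_prodI)
  then show "\<forall>\<^sub>F p in sequentially \<times>\<^sub>F nhds \<xi>. c < (case p of (n, \<zeta>) \<Rightarrow> a n \<zeta> (ys n))"
    by eventually_elim (auto intro: close)
qed

lemma notin_outer_limit_eventually:
  assumes "x \<in> M" "x \<notin> outer_limit M d A" "seq_conv d xs x"
  shows "\<forall>\<^sub>F n in sequentially. xs n \<notin> A n"
proof (rule ccontr)
  assume "\<not> (\<forall>\<^sub>F n in sequentially. xs n \<notin> A n)"
  then have "infinite {n. xs n \<in> A n}"
    by (simp add: eventually_sequentially infinite_nat_iff_unbounded_le)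
  then obtain r :: "nat \<Rightarrow> nat" where r: "strict_mono r" "\<And>k. xs (r k) \<in> A (r k)"
    using infinite_enumerate by blast
  have "seq_conv d (xs \<circ> r) x"
    using LIMSEQ_subseq_LIMSEQ[OF assms(3)[unfolded seq_conv_def] r(1)]
    unfolding seq_conv_def by (simp add: o_def)
  then have "x \<in> outer_limit M d A"
    unfolding outer_limit_def using assms(1) r by (auto intro!: exI[of _ "xs \<circ> r"])
  with assms(2) show False ..
qed

lemma (in Metric_space) penalty_tendsto_PInf:
  assumes "\<And>n. Qs n \<in> M" "\<And>n. Ps n \<in> M" "Q \<in> M" "P \<in> M" "Q \<noteq> P"
    and "seq_conv d Qs Q" "seq_conv d Ps P"
    and \<theta>: "filterlim \<theta> at_top sequentially"
    and e: "\<forall>\<^sub>F n in sequentially. ereal B \<le> e n"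
  shows "(\<lambda>n. e n + ereal (\<theta> n * d (Qs n) (Ps n))) \<longlonglongrightarrow> \<infinity>"
proof -
  have bound: "\<bar>d (Qs n) (Ps n) - d Q P\<bar> \<le> d (Qs n) Q + d (Ps n) P" for n
    using triangle[of "Qs n" Q "Ps n"] triangle[of Q P "Ps n"] triangle[of Q "Qs n" P]
      triangle[of "Qs n" "Ps n" P] commute[of Q "Qs n"] commute[of P "Ps n"]
      assms(1,2)[of n] assms(3,4)
    unfolding abs_le_iff by simp
  have "(\<lambda>n. d (Qs n) (Ps n) - d Q P) \<longlonglongrightarrow> 0"
  proof (rule Lim_null_comparison)
    show "\<forall>\<^sub>F n in sequentially. norm (d (Qs n) (Ps n) - d Q P) \<le> d (Qs n) Q + d (Ps n) P"
      using bound by simp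
    show "(\<lambda>n. d (Qs n) Q + d (Ps n) P) \<longlonglongrightarrow> 0"
      using tendsto_add[OF assms(6,7)[unfolded seq_conv_def]] by simp
  qed
  then have "(\<lambda>n. d (Qs n) (Ps n)) \<longlonglongrightarrow> d Q P"
    by (simp add: LIM_zero_iff)
  moreover have "0 < d Q P"
    using assms(3-5) by simp
  ultimately have "filterlim (\<lambda>n. d (Qs n) (Ps n) * \<theta> n) at_top sequentially"
    using \<theta> by (rule filterlim_tendsto_pos_mult_at_top)
  then have "filterlim (\<lambda>n. B + \<theta> n * d (Qs n) (Ps n)) at_top sequentially"
    by (intro filterlim_tendsto_add_at_top[of _ B]) (simp_all add: mult.commute)
  then have lim: "\<forall>\<^sub>F n in sequentially. r < B + \<theta> n * d (Qs n) (Ps n)" for r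
    by (simp add: filterlim_at_top_dense)
  show ?thesis
    unfolding tendsto_PInfty
  proof
    fix r
    show "\<forall>\<^sub>F n in sequentially. ereal r < e n + ereal (\<theta> n * d (Qs n) (Ps n))"
      using lim[of r] e
    proof eventually_elim
      case (elim n)
      then have "ereal r < ereal B + ereal (\<theta> n * d (Qs n) (Ps n))"
        by simp
      also have "\<dots> \<le> e n + ereal (\<theta> n * d (Qs n) (Ps n))"
        using elim(2) by (rule add_right_mono)
      finally show ?case .
    qed
  qed
qed

section \<open>The penalized approximations\<close>

(* The hypotheses of the proposition; tails_vanish, lower_semicontinuous, bounded_below and
   dominated are its conditions (ii)-(v). *)
locale penalized_approximation =
  fixes XX :: "'x set" and dX :: "'x \<Rightarrow> 'x \<Rightarrow> real"
    and PP :: "'xi::metric_space measure set" and dP :: "'xi measure \<Rightarrow> 'xi measure \<Rightarrow> real"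
    and f :: "'xi \<Rightarrow> 'x \<Rightarrow> ereal" and fs :: "nat \<Rightarrow> 'xi \<Rightarrow> 'x \<Rightarrow> ereal"
    and X :: "'x set" and Xs :: "nat \<Rightarrow> 'x set"
    and P :: "'xi measure" and Ps :: "nat \<Rightarrow> 'xi measure" and \<theta> :: "nat \<Rightarrow> real"
  assumes XX_metric: "Metric_space XX dX"
    and PP_metric: "Metric_space PP dP"
    and prob_space_PP: "Q \<in> PP \<Longrightarrow> prob_space Q"
    and sets_PP: "Q \<in> PP \<Longrightarrow> sets Q = sets borel"
    and weak_conv_PP: "(\<And>n. Qs n \<in> PP) \<Longrightarrow> Q \<in> PP \<Longrightarrow> seq_conv dP Qs Q \<Longrightarrow> weak_conv Qs Q"
    and X_subset: "X \<subseteq> XX" and Xs_subset: "Xs \<nu> \<subseteq> XX"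
    and P_in: "P \<in> PP" and Ps_in: "Ps \<nu> \<in> PP"
    and \<theta>_nonneg: "0 \<le> \<theta> \<nu>"
    and Xs_set_conv: "set_conv XX dX Xs X"
    and \<theta>_at_top: "filterlim \<theta> at_top sequentially"
    and \<theta>_dist: "(\<lambda>\<nu>. \<theta> \<nu> * dP (Ps \<nu>) P) \<longlonglongrightarrow> 0"
    and f_measurable: "x \<in> XX \<Longrightarrow> (\<lambda>\<xi>. f \<xi> x) \<in> borel_measurable borel"
    and fs_measurable: "x \<in> XX \<Longrightarrow> (\<lambda>\<xi>. fs \<nu> \<xi> x) \<in> borel_measurable borel"
    and tails_vanish: "x \<in> XX \<Longrightarrow> (\<And>\<nu>. Qs \<nu> \<in> PP) \<Longrightarrow> seq_conv dP Qs P \<Longrightarrow>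
      Liminf at_top (\<lambda>K::real. liminf2 XX dX (\<lambda>\<nu> y. Eext (Qs \<nu>) (\<lambda>\<xi>.
        if fs \<nu> \<xi> y + iota (Xs \<nu>) y \<le> - ereal K then fs \<nu> \<xi> y + iota (Xs \<nu>) y else 0)) x) = 0"
    and lower_semicontinuous: "x \<in> XX \<Longrightarrow> AE \<xi> in P. f \<xi> x \<le> liminf3 XX dX fs x \<xi>"
    and bounded_below: "x \<in> XX \<Longrightarrow> (\<And>\<nu>. xs \<nu> \<in> Xs \<nu>) \<Longrightarrow> seq_conv dX xs x \<Longrightarrow>
      (\<And>\<nu>. Qs \<nu> \<in> PP) \<Longrightarrow> Q \<in> PP \<Longrightarrow> seq_conv dP Qs Q \<Longrightarrow>
      - \<infinity> < liminf (\<lambda>\<nu>. Eext (Qs \<nu>) (\<lambda>\<xi>. fs \<nu> \<xi> (xs \<nu>)))"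
    and dominated: "x \<in> XX \<Longrightarrow> (\<And>\<nu>. xs \<nu> \<in> Xs \<nu>) \<Longrightarrow> seq_conv dX xs x \<Longrightarrow>
      \<exists>g. integrable P g \<and> (\<forall>\<xi>. 0 \<le> g \<xi>) \<and>
        (AE \<xi> in P. (\<forall>\<nu>. fs \<nu> \<xi> (xs \<nu>) \<le> ereal (g \<xi>)) \<and> (\<lambda>\<nu>. fs \<nu> \<xi> (xs \<nu>)) \<longlonglongrightarrow> f \<xi> x)"
begin

lemma measurable_PP: "Q \<in> PP \<Longrightarrow> g \<in> borel_measurable borel \<Longrightarrow> g \<in> borel_measurable Q"
  by (simp add: measurable_cong_sets[OF sets_PP])

lemma seq_conv_Ps: "seq_conv dP Ps P"
  unfolding seq_conv_def
proof (rule tendsto_sandwich[of "\<lambda>n. 0" _ _ "\<lambda>n. \<theta> n * dP (Ps n) P"])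
  have "\<forall>\<^sub>F n in sequentially. 1 \<le> \<theta> n"
    using \<theta>_at_top by (simp add: filterlim_at_top)
  then show "\<forall>\<^sub>F n in sequentially. dP (Ps n) P \<le> \<theta> n * dP (Ps n) P"
  proof eventually_elim
    case (elim n)
    then show ?case
      using mult_right_mono[OF elim Metric_space.nonneg[OF PP_metric]] by simp
  qed
qed (auto simp: Metric_space.nonneg[OF PP_metric] \<theta>_dist)

lemma phi_lim_eq_Eext: "x \<in> X \<Longrightarrow> phi_lim f X P x P = Eext P (\<lambda>\<xi>. f \<xi> x)"
  by (simp add: phi_lim_def iota_def)

lemma phi_lim_PInf: "Q \<in> PP \<Longrightarrow> Q \<noteq> P \<or> x \<notin> X \<Longrightarrow> phi_lim f X P x Q = \<infinity>"
  by (auto simp: phi_lim_def iota_def intro: Eext_PInf prob_space_PP)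

lemma phi_seq_PInf: "Q \<in> PP \<Longrightarrow> y \<notin> Xs n \<Longrightarrow> phi_seq fs Xs Ps \<theta> dP n y Q = \<infinity>"
  by (simp add: phi_seq_def iota_def Eext_PInf prob_space_PP)

lemma Eext_le_phi_seq:
  "Q \<in> PP \<Longrightarrow> Eext Q (\<lambda>\<xi>. fs n \<xi> y + iota (Xs n) y) \<le> phi_seq fs Xs Ps \<theta> dP n y Q"
  using \<theta>_nonneg[of n] Metric_space.nonneg[OF PP_metric, of Q "Ps n"]
  by (simp add: phi_seq_def add_increasing2)

lemma eventually_Eext_bounded_below:
  assumes "x \<in> X" "seq_conv dX xs x" "\<And>n. Qs n \<in> PP" "Q \<in> PP" "seq_conv dP Qs Q"
  obtains B where "\<forall>\<^sub>F n in sequentially.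
    ereal B \<le> Eext (Qs n) (\<lambda>\<xi>. fs n \<xi> (xs n) + iota (Xs n) (xs n))"
proof -
  obtain a where a: "\<And>n. a n \<in> Xs n" "seq_conv dX a x"
    using \<open>x \<in> X\<close> Xs_set_conv unfolding set_conv_def inner_limit_def by blast
  \<comment> \<open>(iv) only constrains sequences inside the sets Xs n, so xs is patched with a\<close>
  define xs' where "xs' n = (if xs n \<in> Xs n then xs n else a n)" for n
  have "seq_conv dX xs' x"
    unfolding seq_conv_def
  proof (rule tendsto_sandwich[of "\<lambda>n. 0" _ _ "\<lambda>n. dX (xs n) x + dX (a n) x"])
    show "\<forall>\<^sub>F n in sequentially. dX (xs' n) x \<le> dX (xs n) x + dX (a n) x"
      by (auto simp: xs'_def Metric_space.nonneg[OF XX_metric] add_increasing add_increasing2)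
    show "(\<lambda>n. dX (xs n) x + dX (a n) x) \<longlonglongrightarrow> 0"
      using tendsto_add[OF assms(2)[unfolded seq_conv_def] a(2)[unfolded seq_conv_def]] by simp
  qed (auto simp: Metric_space.nonneg[OF XX_metric])
  moreover have "\<And>n. xs' n \<in> Xs n"
    using a(1) by (simp add: xs'_def)
  ultimately have "- \<infinity> < liminf (\<lambda>n. Eext (Qs n) (\<lambda>\<xi>. fs n \<xi> (xs' n)))"
    using assms X_subset by (intro bounded_below) auto
  then obtain B where "ereal B < liminf (\<lambda>n. Eext (Qs n) (\<lambda>\<xi>. fs n \<xi> (xs' n)))"
    using ereal_dense2 by blast
  from less_LiminfD[OF this]
  have "\<forall>\<^sub>F n in sequentially. ereal B \<le> Eext (Qs n) (\<lambda>\<xi>. fs n \<xi> (xs n) + iota (Xs n) (xs n))"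
  proof eventually_elim
    case (elim n)
    show ?case
    proof (cases "xs n \<in> Xs n")
      case True
      then show ?thesis
        using elim by (simp add: xs'_def iota_def)
    qed (simp add: iota_def Eext_PInf prob_space_PP assms(3))
  qed
  then show ?thesis ..
qed

lemma phi_seq_tendsto_PInf:
  assumes "x \<in> XX" "seq_conv dX xs x" "\<And>n. Qs n \<in> PP" "Q \<in> PP" "seq_conv dP Qs Q"
    and "Q \<noteq> P \<or> x \<notin> X"
  shows "(\<lambda>n. phi_seq fs Xs Ps \<theta> dP n (xs n) (Qs n)) \<longlonglongrightarrow> \<infinity>"
proof (cases "x \<in> X")
  case False
  then have "\<forall>\<^sub>F n in sequentially. xs n \<notin> Xs n"
    using assms(1,2) Xs_set_conv unfolding set_conv_def by (intro notin_outer_limit_eventually) auto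
  then have "\<forall>\<^sub>F n in sequentially. phi_seq fs Xs Ps \<theta> dP n (xs n) (Qs n) = \<infinity>"
    by eventually_elim (simp add: phi_seq_PInf assms(3))
  then show ?thesis
    by (rule tendsto_eventually)
next
  case True
  then obtain B where B: "\<forall>\<^sub>F n in sequentially.
      ereal B \<le> Eext (Qs n) (\<lambda>\<xi>. fs n \<xi> (xs n) + iota (Xs n) (xs n))"
    using assms(2-5) by (rule eventually_Eext_bounded_below)
  show ?thesis
    unfolding phi_seq_def
    by (rule Metric_space.penalty_tendsto_PInf[OF PP_metric assms(3) Ps_in assms(4) P_in _ assms(5)
          seq_conv_Ps \<theta>_at_top B]) (use True assms(6) in simp)
qed

lemma liminf_phi_seq_ge:
  assumes "x \<in> X" "\<And>n. xs n \<in> XX" "seq_conv dX xs x" "\<And>n. Qs n \<in> PP" "seq_conv dP Qs P"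
  shows "Eext P (\<lambda>\<xi>. f \<xi> x) \<le> liminf (\<lambda>n. phi_seq fs Xs Ps \<theta> dP n (xs n) (Qs n))"
proof -
  have "x \<in> XX"
    using assms(1) X_subset by blast
  have [measurable]: "(\<lambda>\<xi>. fs n \<xi> (xs n)) \<in> borel_measurable (Qs n)" for n
    by (rule measurable_PP[OF assms(4) fs_measurable[OF assms(2)]])
  have "Eext P (\<lambda>\<xi>. f \<xi> x) \<le> liminf (\<lambda>n. Eext (Qs n) (\<lambda>\<xi>. fs n \<xi> (xs n) + iota (Xs n) (xs n)))"
  proof (rule Eext_le_liminf_weak_conv)
    show "weak_conv Qs P"
      using assms(4) P_in assms(5) by (rule weak_conv_PP)
    show "(\<lambda>\<xi>. f \<xi> x) \<in> borel_measurable P"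
      using P_in f_measurable[OF \<open>x \<in> XX\<close>] by (rule measurable_PP)
    have "0 = Liminf at_top (\<lambda>K::real. liminf2 XX dX (\<lambda>\<nu> y. Eext (Qs \<nu>) (\<lambda>\<xi>.
        if fs \<nu> \<xi> y + iota (Xs \<nu>) y \<le> - ereal K then fs \<nu> \<xi> y + iota (Xs \<nu>) y else 0)) x)"
      using \<open>x \<in> XX\<close> assms(4,5) by (rule tails_vanish[symmetric])
    also have "\<dots> \<le> Liminf at_top (\<lambda>K::real. liminf (\<lambda>n. Eext (Qs n) (\<lambda>\<xi>.
        if fs n \<xi> (xs n) + iota (Xs n) (xs n) \<le> - ereal K
        then fs n \<xi> (xs n) + iota (Xs n) (xs n) else 0)))"
      using liminf2_le_liminf[OF assms(2,3), of "\<lambda>\<nu> y. Eext (Qs \<nu>) (\<lambda>\<xi>.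
        if fs \<nu> \<xi> y + iota (Xs \<nu>) y \<le> - ereal K then fs \<nu> \<xi> y + iota (Xs \<nu>) y else 0)" for K]
      by (intro Liminf_mono always_eventually allI) simp
    finally show "0 \<le> \<dots>" .
    show "AE \<xi> in P. f \<xi> x \<le> Liminf (sequentially \<times>\<^sub>F nhds \<xi>)
        (\<lambda>(n, \<zeta>). fs n \<zeta> (xs n) + iota (Xs n) (xs n))"
      using lower_semicontinuous[OF \<open>x \<in> XX\<close>]
    proof eventually_elim
      case (elim \<xi>)
      also have "liminf3 XX dX fs x \<xi> \<le> Liminf (sequentially \<times>\<^sub>F nhds \<xi>) (\<lambda>(n, \<zeta>). fs n \<zeta> (xs n))"
        using assms(2,3) by (rule liminf3_le_Liminf)
      also have "\<dots> \<le> Liminf (sequentially \<times>\<^sub>F nhds \<xi>) (\<lambda>(n, \<zeta>). fs n \<zeta> (xs n) + iota (Xs n) (xs n))"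
        by (intro Liminf_mono always_eventually) (auto simp: iota_def)
      finally show ?case .
    qed
  qed (use assms(4) P_in in \<open>simp_all add: prob_space_PP sets_PP\<close>)
  also have "\<dots> \<le> liminf (\<lambda>n. phi_seq fs Xs Ps \<theta> dP n (xs n) (Qs n))"
    using assms(4) by (intro Liminf_mono always_eventually allI Eext_le_phi_seq)
  finally show ?thesis .
qed

lemma limsup_phi_seq_le:
  assumes "x \<in> X" "\<And>n. xs n \<in> Xs n" "seq_conv dX xs x"
  shows "limsup (\<lambda>n. phi_seq fs Xs Ps \<theta> dP n (xs n) P) \<le> Eext P (\<lambda>\<xi>. f \<xi> x)"
proof -
  have "x \<in> XX" "\<And>n. xs n \<in> XX"
    using assms(1,2) X_subset Xs_subset by blast+
  obtain g where "integrable P g" "\<And>\<xi>. 0 \<le> g \<xi>"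
    and g: "AE \<xi> in P. (\<forall>n. fs n \<xi> (xs n) \<le> ereal (g \<xi>)) \<and> (\<lambda>n. fs n \<xi> (xs n)) \<longlonglongrightarrow> f \<xi> x"
    using dominated[OF \<open>x \<in> XX\<close> assms(2,3)] by blast
  have "limsup (\<lambda>n. Eext P (\<lambda>\<xi>. fs n \<xi> (xs n))) \<le> Eext P (\<lambda>\<xi>. f \<xi> x)"
  proof (rule limsup_Eext_le_dominated)
    show "(\<lambda>\<xi>. fs n \<xi> (xs n)) \<in> borel_measurable P" for n
      using P_in fs_measurable[OF \<open>xs n \<in> XX\<close>] by (rule measurable_PP)
    show "(\<lambda>\<xi>. f \<xi> x) \<in> borel_measurable P"
      using P_in f_measurable[OF \<open>x \<in> XX\<close>] by (rule measurable_PP)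
  qed fact+
  moreover have "limsup (\<lambda>n. ereal (\<theta> n * dP P (Ps n))) = 0"
  proof -
    have "(\<lambda>n. ereal (\<theta> n * dP P (Ps n))) \<longlonglongrightarrow> ereal 0"
      using \<theta>_dist by (intro tendsto_ereal) (simp add: Metric_space.commute[OF PP_metric])
    then show ?thesis
      by (simp add: lim_imp_Limsup zero_ereal_def)
  qed
  ultimately show ?thesis
    using ereal_limsup_add_mono[of "\<lambda>n. Eext P (\<lambda>\<xi>. fs n \<xi> (xs n))" "\<lambda>n. ereal (\<theta> n * dP P (Ps n))"]
    by (simp add: phi_seq_def iota_def assms(2))
qed

lemma phi_lim_le_liminf_phi_seq:
  assumes "x \<in> XX" "Q \<in> PP" "\<And>n. xs n \<in> XX" "\<And>n. Qs n \<in> PP"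
    and "seq_conv dX xs x" "seq_conv dP Qs Q"
  shows "phi_lim f X P x Q \<le> liminf (\<lambda>n. phi_seq fs Xs Ps \<theta> dP n (xs n) (Qs n))"
proof (cases "Q = P \<and> x \<in> X")
  case True
  then show ?thesis
    using assms by (simp add: phi_lim_eq_Eext liminf_phi_seq_ge)
next
  case False
  then have "(\<lambda>n. phi_seq fs Xs Ps \<theta> dP n (xs n) (Qs n)) \<longlonglongrightarrow> \<infinity>"
    using assms by (intro phi_seq_tendsto_PInf) auto
  then show ?thesis
    by (simp add: lim_imp_Liminf)
qed

lemma recovery_sequence:
  assumes "x \<in> XX" "Q \<in> PP"
  shows "\<exists>xs Qs. (\<forall>n. xs n \<in> XX \<and> Qs n \<in> PP) \<and> seq_conv dX xs x \<and> seq_conv dP Qs Q \<and>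
    (\<lambda>n. phi_seq fs Xs Ps \<theta> dP n (xs n) (Qs n)) \<longlonglongrightarrow> phi_lim f X P x Q"
proof (cases "Q = P \<and> x \<in> X")
  case True
  then obtain a where a: "\<And>n. a n \<in> Xs n" "seq_conv dX a x"
    using Xs_set_conv unfolding set_conv_def inner_limit_def by blast
  have "\<And>n. a n \<in> XX"
    using a(1) Xs_subset by blast
  moreover have "seq_conv dP (\<lambda>n. P) P"
    using P_in by (simp add: seq_conv_def Metric_space.mdist_zero[OF PP_metric])
  moreover have "(\<lambda>n. phi_seq fs Xs Ps \<theta> dP n (a n) P) \<longlonglongrightarrow> phi_lim f X P x P"
  proof (rule Liminf_eq_Limsup)
    have "phi_lim f X P x P \<le> liminf (\<lambda>n. phi_seq fs Xs Ps \<theta> dP n (a n) P)"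
      using True a(2) calculation P_in by (simp add: phi_lim_eq_Eext liminf_phi_seq_ge)
    moreover have "limsup (\<lambda>n. phi_seq fs Xs Ps \<theta> dP n (a n) P) \<le> phi_lim f X P x P"
      using True a by (simp add: phi_lim_eq_Eext limsup_phi_seq_le)
    moreover have "liminf (\<lambda>n. phi_seq fs Xs Ps \<theta> dP n (a n) P)
        \<le> limsup (\<lambda>n. phi_seq fs Xs Ps \<theta> dP n (a n) P)"
      by (rule Liminf_le_Limsup) simp
    ultimately show "liminf (\<lambda>n. phi_seq fs Xs Ps \<theta> dP n (a n) P) = phi_lim f X P x P"
      and "limsup (\<lambda>n. phi_seq fs Xs Ps \<theta> dP n (a n) P) = phi_lim f X P x P"
      by (auto intro: antisym order_trans)
  qed simp
  ultimately show ?thesis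
    using True a P_in by (intro exI[of _ a] exI[of _ "\<lambda>n. P"]) simp
next
  case False
  have "seq_conv dX (\<lambda>n. x) x" "seq_conv dP (\<lambda>n. Q) Q"
    using assms
    by (simp_all add: seq_conv_def Metric_space.mdist_zero[OF XX_metric]
        Metric_space.mdist_zero[OF PP_metric])
  moreover have "(\<lambda>n. phi_seq fs Xs Ps \<theta> dP n x Q) \<longlonglongrightarrow> \<infinity>"
    using False assms calculation by (intro phi_seq_tendsto_PInf) auto
  moreover have "phi_lim f X P x Q = \<infinity>"
    using False assms by (simp add: phi_lim_PInf)
  ultimately show ?thesis
    using assms by (intro exI[of _ "\<lambda>n. x"] exI[of _ "\<lambda>n. Q"]) simp
qed

lemma epi_conv_phi: "epi_conv XX dX PP dP (phi_seq fs Xs Ps \<theta> dP) (phi_lim f X P)"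
  unfolding epi_conv_def
  by (intro ballI conjI allI impI phi_lim_le_liminf_phi_seq recovery_sequence) auto

end

theorem proposition4p1:
  fixes S :: "(real ^ 'd) set"
    and XX :: "(real ^ 'd \<Rightarrow> ereal) set" and dX :: "(real ^ 'd \<Rightarrow> ereal) \<Rightarrow> (real ^ 'd \<Rightarrow> ereal) \<Rightarrow> real"
    and PP :: "'xi::metric_space measure set" and dP :: "'xi measure \<Rightarrow> 'xi measure \<Rightarrow> real"
    and f :: "'xi \<Rightarrow> (real ^ 'd \<Rightarrow> ereal) \<Rightarrow> ereal"
    and fs :: "nat \<Rightarrow> 'xi \<Rightarrow> (real ^ 'd \<Rightarrow> ereal) \<Rightarrow> ereal"
    and X :: "(real ^ 'd \<Rightarrow> ereal) set" and Xs :: "nat \<Rightarrow> (real ^ 'd \<Rightarrow> ereal) set"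
    and P :: "'xi measure" and Ps :: "nat \<Rightarrow> 'xi measure"
    and \<theta> :: "nat \<Rightarrow> real"
  assumes S_closed: "closed S"
    and XX_fun: "\<forall>u\<in>XX. \<forall>s. s \<notin> S \<longrightarrow> u s = undefined"
    and XX_metric: "Metric_space XX dX"
    and PP_prob: "\<forall>Q\<in>PP. prob_space Q \<and> sets Q = sets borel"
    and PP_metric: "Metric_space PP dP"
    and PP_weak: "\<forall>Qs Q. (\<forall>n. Qs n \<in> PP) \<and> Q \<in> PP \<longrightarrow> (seq_conv dP Qs Q \<longleftrightarrow> weak_conv Qs Q)"
    and X_sub: "X \<subseteq> XX" and Xs_sub: "\<forall>\<nu>. Xs \<nu> \<subseteq> XX"
    and P_in: "P \<in> PP" and Ps_in: "\<forall>\<nu>. Ps \<nu> \<in> PP"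
    and \<theta>_nonneg: "\<forall>\<nu>. 0 \<le> \<theta> \<nu>"
    and Xs_closed: "\<forall>\<nu>. closedin (Metric_space.mtopology XX dX) (Xs \<nu>)"
    and Xs_conv: "set_conv XX dX Xs X"
    and \<theta>_inf: "filterlim \<theta> at_top sequentially"
    and \<theta>_dist: "(\<lambda>\<nu>. \<theta> \<nu> * dP (Ps \<nu>) P) \<longlonglongrightarrow> 0"
    and cond_i: "\<forall>x\<in>XX. (\<lambda>\<xi>. f \<xi> x) \<in> borel_measurable borel \<and>
                     (\<forall>\<nu>. (\<lambda>\<xi>. fs \<nu> \<xi> x) \<in> borel_measurable borel) \<and>
                     (\<forall>\<xi>. f \<xi> x > -\<infinity>)"
    and cond_ii: "\<forall>x\<in>XX. \<forall>Qs. (\<forall>\<nu>. Qs \<nu> \<in> PP) \<and> seq_conv dP Qs P \<longrightarrow>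
                   Liminf at_top (\<lambda>K::real.
                     liminf2 XX dX
                       (\<lambda>\<nu> y. Eext (Qs \<nu>) (\<lambda>\<xi>.
                          if fs \<nu> \<xi> y + iota (Xs \<nu>) y \<le> - ereal K
                          then fs \<nu> \<xi> y + iota (Xs \<nu>) y else 0)) x) = 0"
    and cond_iii: "\<forall>x\<in>XX. AE \<xi> in P. liminf3 XX dX fs x \<xi> \<ge> f \<xi> x"
    and cond_iv: "\<forall>x\<in>XX. \<forall>xs Qs Q. (\<forall>\<nu>. xs \<nu> \<in> Xs \<nu>) \<and> seq_conv dX xs x \<and>
                   (\<forall>\<nu>. Qs \<nu> \<in> PP) \<and> Q \<in> PP \<and> seq_conv dP Qs Q \<longrightarrow>
                   liminf (\<lambda>\<nu>. Eext (Qs \<nu>) (\<lambda>\<xi>. fs \<nu> \<xi> (xs \<nu>))) > -\<infinity>"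
    and cond_v: "\<forall>x\<in>XX. \<forall>xs. (\<forall>\<nu>. xs \<nu> \<in> Xs \<nu>) \<and> seq_conv dX xs x \<longrightarrow>
                   (\<exists>g::'xi \<Rightarrow> real. integrable P g \<and> (\<forall>\<xi>. 0 \<le> g \<xi>) \<and>
                      (AE \<xi> in P. (\<forall>\<nu>. fs \<nu> \<xi> (xs \<nu>) \<le> ereal (g \<xi>)) \<and>
                                  (\<lambda>\<nu>. fs \<nu> \<xi> (xs \<nu>)) \<longlonglongrightarrow> f \<xi> x))"
  shows "epi_conv XX dX PP dP (phi_seq fs Xs Ps \<theta> dP) (phi_lim f X P)"
proof -
  interpret penalized_approximation XX dX PP dP f fs X Xs P Ps \<theta>
  proof (rule penalized_approximation.intro)
    show "\<And>Qs Q. (\<And>n. Qs n \<in> PP) \<Longrightarrow> Q \<in> PP \<Longrightarrow> seq_conv dP Qs Q \<Longrightarrow> weak_conv Qs Q"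
      using PP_weak by blast
    show "\<And>x xs Qs Q. x \<in> XX \<Longrightarrow> (\<And>\<nu>. xs \<nu> \<in> Xs \<nu>) \<Longrightarrow> seq_conv dX xs x \<Longrightarrow>
        (\<And>\<nu>. Qs \<nu> \<in> PP) \<Longrightarrow> Q \<in> PP \<Longrightarrow> seq_conv dP Qs Q \<Longrightarrow>
        - \<infinity> < liminf (\<lambda>\<nu>. Eext (Qs \<nu>) (\<lambda>\<xi>. fs \<nu> \<xi> (xs \<nu>)))"
      using cond_iv by blast
  qed (use assms in auto)
  show ?thesis
    by (rule epi_conv_phi)
qed

end
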